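(* There exists $C>0$ such that for all $N$ large enough $$\max_{x\in\mathbb T_N^d}\sup_{\eta\in\mathcal X_N}\Big|E^{\nu_\beta}[f_x\mid\eta_x^\ell]-\tilde f_x(\eta_x^\ell)+\frac{\chi(\eta_x^\ell)}{2\ell_*^d}\frac{\partial^2\tilde f_x}{\partial\rho^2}(\eta_x^\ell)\Big|\le\frac C{\ell^{2d}}.$$
   Context: $\mathbb T_N^d=(\mathbb Z/N\mathbb Z)^d$, $\mathcal X_N=\{0,1\}^{\mathbb T_N^d}$, $(\tau_x\eta)_z=\eta_{z+x}$, $\tau_xh(\eta)=h(\tau_x\eta)$. $\nu_\rho$ denotes the Bernoulli product measure of mean $\rho\in[0,1]$, and $\beta=\frac12$. $\chi(\rho)=\rho(1-\rho)$. $h$ is an $N$-independent local function (depending on finitely many coordinates, supported in a finite box), $\tilde h(\rho)=E^{\nu_\rho}[h]$. Time is fixed and suppressed: $u_x\in[u_-,u_+]$, $0<u_-<u_+<1$, are deterministic values and $f_x(\eta)=\tau_xh(\eta)-\tilde h(u_x)-\tilde h'(u_x)(\eta_x-u_x)$, $\tilde f_x(\rho)=E^{\nu_\rho}[f_x]$. $\ell=\ell(N)$ with $1\ll\ell\ll N$, $\ell_*=2\ell+1$, $\Lambda_{\ell,x}=\{y:|y-x|\le\ell\}$ (a cube with $\ell_*^d$ sites), $\eta_x^\ell=\ell_*^{-d}\sum_{y\in\Lambda_{\ell,x}}\eta_y$. *)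

theory Defs
  imports "HOL-Analysis.Analysis"
begin

text \<open>Sites of the discrete torus (Z/NZ)^d: the index type 'd (finite, CARD('d) = d)
  gives the coordinates; a site is a vector in Z^d with all coordinates in {0..N-1}.\<close>

definition torus :: "nat \<Rightarrow> ('d::finite \<Rightarrow> int) set" where
  "torus N = {z. \<forall>i. 0 \<le> z i \<and> z i < int N}"

definition tor :: "nat \<Rightarrow> ('d::finite \<Rightarrow> int) \<Rightarrow> ('d \<Rightarrow> int)" where
  "tor N y = (\<lambda>i. y i mod int N)"

definition configs :: "nat \<Rightarrow> (('d::finite \<Rightarrow> int) \<Rightarrow> bool) set" where
  "configs N = {\<eta>. \<forall>z. z \<notin> torus N \<longrightarrow> \<eta> z = False}"

definition bern :: "nat \<Rightarrow> real \<Rightarrow> (('d::finite \<Rightarrow> int) \<Rightarrow> bool) \<Rightarrow> real" where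
  "bern N \<rho> \<eta> = (\<Prod>z\<in>torus N. if \<eta> z then \<rho> else 1 - \<rho>)"

definition loc_exp ::
  "('d::finite \<Rightarrow> int) set \<Rightarrow> ((('d \<Rightarrow> int) \<Rightarrow> bool) \<Rightarrow> real) \<Rightarrow> real \<Rightarrow> real" where
  "loc_exp A h \<rho> = (\<Sum>\<xi>\<in>{\<xi>. \<forall>a. a \<notin> A \<longrightarrow> \<xi> a = False}.
       (\<Prod>a\<in>A. if \<xi> a then \<rho> else 1 - \<rho>) * h \<xi>)"

definition shift_loc ::
  "nat \<Rightarrow> ((('d::finite \<Rightarrow> int) \<Rightarrow> bool) \<Rightarrow> real) \<Rightarrow> ('d \<Rightarrow> int) \<Rightarrow> (('d \<Rightarrow> int) \<Rightarrow> bool) \<Rightarrow> real" where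
  "shift_loc N h x \<eta> = h (\<lambda>a. \<eta> (tor N (\<lambda>i. x i + a i)))"

definition fx ::
  "nat \<Rightarrow> ('d::finite \<Rightarrow> int) set \<Rightarrow> ((('d \<Rightarrow> int) \<Rightarrow> bool) \<Rightarrow> real) \<Rightarrow> (('d \<Rightarrow> int) \<Rightarrow> real)
    \<Rightarrow> ('d \<Rightarrow> int) \<Rightarrow> (('d \<Rightarrow> int) \<Rightarrow> bool) \<Rightarrow> real" where
  "fx N A h u x \<eta> = shift_loc N h x \<eta> - loc_exp A h (u x)
      - deriv (loc_exp A h) (u x) * (of_bool (\<eta> x) - u x)"

definition fx_tilde ::
  "nat \<Rightarrow> ('d::finite \<Rightarrow> int) set \<Rightarrow> ((('d \<Rightarrow> int) \<Rightarrow> bool) \<Rightarrow> real) \<Rightarrow> (('d \<Rightarrow> int) \<Rightarrow> real)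
    \<Rightarrow> ('d \<Rightarrow> int) \<Rightarrow> real \<Rightarrow> real" where
  "fx_tilde N A h u x \<rho> = (\<Sum>\<eta>\<in>configs N. bern N \<rho> \<eta> * fx N A h u x \<eta>)"

definition box :: "nat \<Rightarrow> nat \<Rightarrow> ('d::finite \<Rightarrow> int) \<Rightarrow> ('d \<Rightarrow> int) set" where
  "box N l x = {tor N (\<lambda>i. x i + v i) | v. \<forall>i. \<bar>v i\<bar> \<le> int l}"

text \<open>Block average eta_x^l = l_*^{-d} sum_{y in Lambda_{l,x}} eta_y, l_* = 2l+1.\<close>
definition blockavg :: "nat \<Rightarrow> nat \<Rightarrow> ('d::finite \<Rightarrow> int) \<Rightarrow> (('d \<Rightarrow> int) \<Rightarrow> bool) \<Rightarrow> real" where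
  "blockavg N l x \<eta> = (\<Sum>y\<in>box N l x. of_bool (\<eta> y)) / (2 * real l + 1) ^ CARD('d)"

text \<open>Conditional expectation E^{nu_rho}[F | eta_x^l] evaluated at the configuration eta
  (elementary conditional expectation given a discrete random variable on the finite space X_N).\<close>
definition cond_exp_block ::
  "nat \<Rightarrow> real \<Rightarrow> nat \<Rightarrow> ('d::finite \<Rightarrow> int) \<Rightarrow> ((('d \<Rightarrow> int) \<Rightarrow> bool) \<Rightarrow> real)
     \<Rightarrow> (('d \<Rightarrow> int) \<Rightarrow> bool) \<Rightarrow> real" where
  "cond_exp_block N \<rho> l x F \<eta> =
     (\<Sum>\<xi>\<in>{\<xi>\<in>configs N. blockavg N l x \<xi> = blockavg N l x \<eta>}. bern N \<rho> \<xi> * F \<xi>)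
     / (\<Sum>\<xi>\<in>{\<xi>\<in>configs N. blockavg N l x \<xi> = blockavg N l x \<eta>}. bern N \<rho> \<xi>)"

definition chi :: "real \<Rightarrow> real" where
  "chi \<rho> = \<rho> * (1 - \<rho>)"

end

theory Submission
  imports Defs
begin

text \<open>
  Under \<nu>_(1/2) every configuration has the same weight, so conditioning on the block average
  k/n (n = (2 l + 1)^d sites) makes the occupied set of the box a uniformly random k-subset.
  A function depending on m sites of the box then sees each pattern with j particles with weight
  C(n - m, k - j) / C(n, k) = [k]_j [n - k]_(m - j) / [n]_m (falling factorials), while under
  \<nu>_\<rho> the same pattern has weight \<rho>^j (1 - \<rho>)^(m - j). Expanding the falling factorials
  in \<epsilon> = 1/n at \<rho> = k/n, the first weight is the second one minus \<epsilon> \<chi>(\<rho>)/2 times its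
  second derivative, up to O(\<epsilon>^2) uniformly in \<rho>; summing over the 2^m patterns gives the
  bound C / l^(2d).
\<close>

section \<open>Configurations on a finite set\<close>

definition configs_on :: "'a set \<Rightarrow> ('a \<Rightarrow> bool) set" where
  "configs_on S = {\<xi>. \<forall>z. z \<notin> S \<longrightarrow> \<xi> z = False}"

definition depends_on :: "'a set \<Rightarrow> (('a \<Rightarrow> bool) \<Rightarrow> real) \<Rightarrow> bool" where
  "depends_on S G \<longleftrightarrow> (\<forall>\<xi> \<xi>'. (\<forall>z\<in>S. \<xi> z = \<xi>' z) \<longrightarrow> G \<xi> = G \<xi>')"

lemma depends_onD: "depends_on S G \<Longrightarrow> (\<And>z. z \<in> S \<Longrightarrow> \<xi> z = \<xi>' z) \<Longrightarrow> G \<xi> = G \<xi>'"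
  unfolding depends_on_def by blast

lemma depends_on_const: "depends_on {} (\<lambda>_. c)"
  unfolding depends_on_def by simp

lemma depends_on_site: "depends_on {x} (\<lambda>\<xi>. of_bool (\<xi> x))"
  unfolding depends_on_def by simp

lemma bij_betw_configs_on_Pow: "bij_betw (\<lambda>\<xi>. {z\<in>S. \<xi> z}) (configs_on S) (Pow S)"
  by (rule bij_betw_byWitness[where f' = "\<lambda>X z. z \<in> X"]) (auto simp: configs_on_def)

lemma finite_configs_on: "finite S \<Longrightarrow> finite (configs_on S)"
  using bij_betw_finite[OF bij_betw_configs_on_Pow[of S]] by simp

lemma card_configs_on: "finite S \<Longrightarrow> card (configs_on S) = 2 ^ card S"
  using bij_betw_same_card[OF bij_betw_configs_on_Pow[of S]] by (simp add: card_Pow)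

lemma configs_on_empty: "configs_on {} = {\<lambda>_. False}"
  by (auto simp: configs_on_def)

lemma card_configs_on_occupied:
  assumes "finite S"
  shows "card {\<xi>\<in>configs_on S. card {z\<in>S. \<xi> z} = r} = card S choose r"
proof -
  have "bij_betw (\<lambda>\<xi>. {z\<in>S. \<xi> z}) {\<xi>\<in>configs_on S. card {z\<in>S. \<xi> z} = r} {X\<in>Pow S. card X = r}"
    by (rule bij_betw_Collect[OF bij_betw_configs_on_Pow]) simp
  then show ?thesis
    using n_subsets[OF assms, of r] by (simp add: bij_betw_same_card)
qed

lemma configs_on_singleton: "configs_on {t} = {(\<lambda>_. False)(t := True), \<lambda>_. False}"
proof -
  have "\<xi> \<in> configs_on {t} \<longleftrightarrow> \<xi> = (\<lambda>_. False)(t := True) \<or> \<xi> = (\<lambda>_. False)" for \<xi>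
    by (cases "\<xi> t") (auto simp: configs_on_def fun_eq_iff)
  then show ?thesis
    by blast
qed

lemma sum_configs_on_singleton:
  "(\<Sum>\<zeta>\<in>configs_on {t}. g \<zeta>) = g ((\<lambda>_. False)(t := True)) + g (\<lambda>_. False)"
  by (simp add: configs_on_singleton fun_eq_iff)

lemma bij_betw_configs_on_Un:
  assumes "S \<inter> D = {}"
  shows "bij_betw (\<lambda>(\<zeta>, \<omega>) z. \<zeta> z \<or> \<omega> z) (configs_on S \<times> configs_on D) (configs_on (S \<union> D))"
  by (rule bij_betw_byWitness[where f' = "\<lambda>\<xi>. (\<lambda>z. z \<in> S \<and> \<xi> z, \<lambda>z. z \<in> D \<and> \<xi> z)"])
     (use assms in \<open>auto simp: configs_on_def fun_eq_iff\<close>)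

lemma sum_configs_on_Un:
  assumes "S \<inter> D = {}"
  shows "(\<Sum>\<xi>\<in>configs_on (S \<union> D). g \<xi>)
       = (\<Sum>\<zeta>\<in>configs_on S. \<Sum>\<omega>\<in>configs_on D. g (\<lambda>z. \<zeta> z \<or> \<omega> z))"
  using sum.reindex_bij_betw[OF bij_betw_configs_on_Un[OF assms], of g]
  by (simp add: sum.cartesian_product split_def)

lemma sum_configs_on_prod:
  fixes f :: "'a \<Rightarrow> bool \<Rightarrow> real"
  assumes "finite D"
  shows "(\<Sum>\<omega>\<in>configs_on D. \<Prod>z\<in>D. f z (\<omega> z)) = (\<Prod>z\<in>D. f z True + f z False)"
  using assms
proof (induction D rule: finite_induct)
  case empty
  then show ?case by (simp add: configs_on_empty)
next
  case (insert t D)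
  have prod_split: "(\<Prod>z\<in>insert t D. f z (\<zeta> z \<or> \<omega> z)) = f t (\<zeta> t) * (\<Prod>z\<in>D. f z (\<omega> z))"
    if "\<zeta> \<in> configs_on {t}" "\<omega> \<in> configs_on D" for \<zeta> \<omega>
  proof -
    have "(\<Prod>z\<in>D. f z (\<zeta> z \<or> \<omega> z)) = (\<Prod>z\<in>D. f z (\<omega> z))"
      using that insert.hyps by (intro prod.cong) (auto simp: configs_on_def)
    moreover have "\<omega> t = False"
      using that insert.hyps by (auto simp: configs_on_def)
    ultimately show ?thesis
      using insert.hyps by simp
  qed
  have "(\<Sum>\<omega>\<in>configs_on (insert t D). \<Prod>z\<in>insert t D. f z (\<omega> z))
      = (\<Sum>\<zeta>\<in>configs_on {t}. \<Sum>\<omega>\<in>configs_on D. \<Prod>z\<in>insert t D. f z (\<zeta> z \<or> \<omega> z))"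
    using sum_configs_on_Un[of "{t}" D] insert.hyps by simp
  also have "\<dots> = (\<Sum>\<zeta>\<in>configs_on {t}. f t (\<zeta> t) * (\<Sum>\<omega>\<in>configs_on D. \<Prod>z\<in>D. f z (\<omega> z)))"
    by (intro sum.cong refl) (simp add: prod_split sum_distrib_left)
  finally show ?case
    using insert by (simp add: sum_configs_on_singleton distrib_right)
qed

lemma sum_configs_on_local:
  fixes w :: "bool \<Rightarrow> real"
  assumes "finite T" "S \<subseteq> T" "depends_on S G" "w True + w False = 1"
  shows "(\<Sum>\<xi>\<in>configs_on T. (\<Prod>z\<in>T. w (\<xi> z)) * G \<xi>) = (\<Sum>\<zeta>\<in>configs_on S. (\<Prod>z\<in>S. w (\<zeta> z)) * G \<zeta>)"
proof -
  define D where "D = T - S"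
  have T: "T = S \<union> D" "S \<inter> D = {}" "finite S" "finite D"
    using assms(1,2) finite_subset unfolding D_def by auto
  have factor: "(\<Prod>z\<in>T. w (\<zeta> z \<or> \<omega> z)) * G (\<lambda>z. \<zeta> z \<or> \<omega> z)
      = (\<Prod>z\<in>S. w (\<zeta> z)) * G \<zeta> * (\<Prod>z\<in>D. w (\<omega> z))"
    if "\<zeta> \<in> configs_on S" "\<omega> \<in> configs_on D" for \<zeta> \<omega>
  proof -
    have on_S: "\<forall>z\<in>S. (\<zeta> z \<or> \<omega> z) = \<zeta> z" and on_D: "\<forall>z\<in>D. (\<zeta> z \<or> \<omega> z) = \<omega> z"
      using that T(2) by (auto simp: configs_on_def)
    have "G (\<lambda>z. \<zeta> z \<or> \<omega> z) = G \<zeta>"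
      using on_S by (intro depends_onD[OF assms(3)]) simp
    moreover have "(\<Prod>z\<in>T. w (\<zeta> z \<or> \<omega> z)) = (\<Prod>z\<in>S. w (\<zeta> z)) * (\<Prod>z\<in>D. w (\<omega> z))"
      unfolding T(1) prod.union_disjoint[OF T(3,4,2)] using on_S on_D by (simp cong: prod.cong)
    ultimately show ?thesis
      by simp
  qed
  have "(\<Sum>\<xi>\<in>configs_on T. (\<Prod>z\<in>T. w (\<xi> z)) * G \<xi>)
      = (\<Sum>\<zeta>\<in>configs_on S. (\<Prod>z\<in>S. w (\<zeta> z)) * G \<zeta> * (\<Sum>\<omega>\<in>configs_on D. \<Prod>z\<in>D. w (\<omega> z)))"
    unfolding T(1) sum_configs_on_Un[OF T(2)] sum_distrib_left
    by (intro sum.cong refl) (simp add: factor T(1)[symmetric])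
  then show ?thesis
    using assms(4) sum_configs_on_prod[OF T(4), of "\<lambda>_. w"] by simp
qed

definition completions :: "nat \<Rightarrow> nat \<Rightarrow> nat \<Rightarrow> nat" where
  "completions w k j = (if j \<le> k then w choose (k - j) else 0)"

lemma card_configs_on_completing:
  assumes "finite W"
  shows "card {\<omega>\<in>configs_on W. j + card {z\<in>W. \<omega> z} = k} = completions (card W) k j"
proof (cases "j \<le> k")
  case True
  then have "{\<omega>\<in>configs_on W. j + card {z\<in>W. \<omega> z} = k} = {\<omega>\<in>configs_on W. card {z\<in>W. \<omega> z} = k - j}"
    by auto
  then show ?thesis
    using True card_configs_on_occupied[OF assms] by (simp add: completions_def)
next
  case False
  then show ?thesis
    by (simp add: completions_def)
qed

lemma sum_configs_on_count:
  fixes c :: real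
  assumes "finite D" "U \<subseteq> D"
  shows "(\<Sum>\<omega>\<in>configs_on D. if j + card {z\<in>U. \<omega> z} = k then c else 0)
       = 2 ^ card (D - U) * (c * completions (card U) k j)"
proof -
  have fin: "finite U" "finite (D - U)" and D: "D = U \<union> (D - U)" "U \<inter> (D - U) = {}"
    using assms finite_subset by auto
  have "card {z\<in>U. \<omega> z \<or> \<theta> z} = card {z\<in>U. \<omega> z}" if "\<theta> \<in> configs_on (D - U)" for \<omega> \<theta>
    using that by (intro arg_cong[where f = card]) (auto simp: configs_on_def)
  then have "(\<Sum>\<omega>\<in>configs_on D. if j + card {z\<in>U. \<omega> z} = k then c else 0)
      = (\<Sum>\<omega>\<in>configs_on U. \<Sum>\<theta>\<in>configs_on (D - U). if j + card {z\<in>U. \<omega> z} = k then c else 0)"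
    by (subst D(1), subst sum_configs_on_Un[OF D(2)]) (intro sum.cong refl, simp)
  also have "\<dots> = 2 ^ card (D - U) * (\<Sum>\<omega>\<in>configs_on U. if j + card {z\<in>U. \<omega> z} = k then c else 0)"
    by (simp add: card_configs_on[OF fin(2)] sum_distrib_left)
  also have "\<dots> = 2 ^ card (D - U) * (\<Sum>\<omega>\<in>{\<omega>\<in>configs_on U. j + card {z\<in>U. \<omega> z} = k}. c)"
    unfolding sum.inter_filter[OF finite_configs_on[OF fin(1)]] ..
  finally show ?thesis
    by (simp add: card_configs_on_completing[OF fin(1)])
qed

lemma sum_configs_on_level_local:
  fixes G :: "('a \<Rightarrow> bool) \<Rightarrow> real"
  assumes "finite T" "S \<subseteq> W" "W \<subseteq> T" "depends_on S G"
  shows "(\<Sum>\<xi>\<in>configs_on T. if card {z\<in>W. \<xi> z} = k then G \<xi> else 0)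
       = 2 ^ card (T - W) * (\<Sum>\<zeta>\<in>configs_on S. G \<zeta> * completions (card W - card S) k (card {z\<in>S. \<zeta> z}))"
proof -
  define D where "D = T - S"
  define U where "U = W - S"
  have fin: "finite S" "finite U" "finite D"
    using assms finite_subset unfolding D_def U_def by (metis finite_Diff)+
  have T: "T = S \<union> D" "S \<inter> D = {}" and U: "U \<subseteq> D" "D - U = T - W"
    using assms(2,3) unfolding D_def U_def by auto
  have card_U: "card U = card W - card S"
    unfolding U_def using assms(2) fin(1) by (simp add: card_Diff_subset)
  have "card {z\<in>W. \<zeta> z \<or> \<omega> z} = card {z\<in>S. \<zeta> z} + card {z\<in>U. \<omega> z}"
    if "\<zeta> \<in> configs_on S" "\<omega> \<in> configs_on D" for \<zeta> \<omega>
  proof -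
    have "{z\<in>W. \<zeta> z \<or> \<omega> z} = {z\<in>S. \<zeta> z} \<union> {z\<in>U. \<omega> z}"
      using that assms(2,3) unfolding U_def D_def configs_on_def by auto
    moreover have "{z\<in>S. \<zeta> z} \<inter> {z\<in>U. \<omega> z} = {}"
      unfolding U_def by blast
    ultimately show ?thesis
      using fin(1,2) by (simp add: card_Un_disjoint)
  qed
  moreover have "G (\<lambda>z. \<zeta> z \<or> \<omega> z) = G \<zeta>" if "\<zeta> \<in> configs_on S" "\<omega> \<in> configs_on D" for \<zeta> \<omega>
    using that T(2) by (intro depends_onD[OF assms(4)]) (auto simp: configs_on_def)
  ultimately have "(\<Sum>\<xi>\<in>configs_on T. if card {z\<in>W. \<xi> z} = k then G \<xi> else 0)
      = (\<Sum>\<zeta>\<in>configs_on S. \<Sum>\<omega>\<in>configs_on D.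
           if card {z\<in>S. \<zeta> z} + card {z\<in>U. \<omega> z} = k then G \<zeta> else 0)"
    unfolding T(1) sum_configs_on_Un[OF T(2)] by (intro sum.cong refl) (simp add: T(1)[symmetric])
  then show ?thesis
    using sum_configs_on_count[OF fin(3) U(1)]
    by (simp add: U(2) card_U sum_distrib_left algebra_simps)
qed

section \<open>Falling products and hypergeometric weights\<close>

definition bern_weight :: "nat \<Rightarrow> nat \<Rightarrow> real \<Rightarrow> real" where
  "bern_weight a b \<rho> = \<rho> ^ a * (1 - \<rho>) ^ b"

definition bern_weight_deriv :: "nat \<Rightarrow> nat \<Rightarrow> real \<Rightarrow> real" where
  "bern_weight_deriv a b \<rho> = real a * \<rho> ^ (a - 1) * (1 - \<rho>) ^ b - real b * \<rho> ^ a * (1 - \<rho>) ^ (b - 1)"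

definition bern_weight_deriv2 :: "nat \<Rightarrow> nat \<Rightarrow> real \<Rightarrow> real" where
  "bern_weight_deriv2 a b \<rho> = real a * (real a - 1) * \<rho> ^ (a - 2) * (1 - \<rho>) ^ b
     - 2 * real a * real b * \<rho> ^ (a - 1) * (1 - \<rho>) ^ (b - 1)
     + real b * (real b - 1) * \<rho> ^ a * (1 - \<rho>) ^ (b - 2)"

lemma has_field_derivative_bern_weight:
  "(bern_weight a b has_field_derivative bern_weight_deriv a b \<rho>) (at \<rho>)"
  unfolding bern_weight_def bern_weight_deriv_def
  by (auto intro!: derivative_eq_intros simp: algebra_simps)

lemma has_field_derivative_bern_weight_deriv:
  "(bern_weight_deriv a b has_field_derivative bern_weight_deriv2 a b \<rho>) (at \<rho>)"
proof -
  have "real (n - Suc 0) = (if n = 0 then 0 else real n - 1)" for n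
    by auto
  then show ?thesis
    unfolding bern_weight_deriv_def[abs_def] bern_weight_deriv2_def
    by (auto intro!: derivative_eq_intros simp: algebra_simps numeral_2_eq_2 split: if_splits)
qed

lemma deriv2_bern_weight_sum_affine:
  "(deriv ^^ 2) (\<lambda>r. (\<Sum>\<zeta>\<in>Z. c \<zeta> * bern_weight (a \<zeta>) (b \<zeta>) r) + \<alpha> + \<beta> * r) \<rho>
     = (\<Sum>\<zeta>\<in>Z. c \<zeta> * bern_weight_deriv2 (a \<zeta>) (b \<zeta>) \<rho>)"
proof -
  have "((\<lambda>r. (\<Sum>\<zeta>\<in>Z. c \<zeta> * bern_weight (a \<zeta>) (b \<zeta>) r) + \<alpha> + \<beta> * r)
      has_field_derivative (\<Sum>\<zeta>\<in>Z. c \<zeta> * bern_weight_deriv (a \<zeta>) (b \<zeta>) r) + \<beta>) (at r)" for r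
    by (auto intro!: derivative_eq_intros DERIV_sum DERIV_cmult has_field_derivative_bern_weight
        simp: mult.commute)
  then have "deriv (\<lambda>r. (\<Sum>\<zeta>\<in>Z. c \<zeta> * bern_weight (a \<zeta>) (b \<zeta>) r) + \<alpha> + \<beta> * r)
      = (\<lambda>r. (\<Sum>\<zeta>\<in>Z. c \<zeta> * bern_weight_deriv (a \<zeta>) (b \<zeta>) r) + \<beta>)"
    by (intro ext DERIV_imp_deriv)
  moreover have "((\<lambda>r. (\<Sum>\<zeta>\<in>Z. c \<zeta> * bern_weight_deriv (a \<zeta>) (b \<zeta>) r) + \<beta>)
      has_field_derivative (\<Sum>\<zeta>\<in>Z. c \<zeta> * bern_weight_deriv2 (a \<zeta>) (b \<zeta>) \<rho>)) (at \<rho>)"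
    by (auto intro!: derivative_eq_intros DERIV_sum DERIV_cmult has_field_derivative_bern_weight_deriv
        simp: mult.commute)
  ultimately show ?thesis
    by (simp add: numeral_2_eq_2 DERIV_imp_deriv)
qed

lemma real_choose_two: "real (n choose 2) = real n * (real n - 1) / 2"
  by (induction n) (simp_all add: numeral_2_eq_2 field_simps)

lemma chi_mult_bern_weight_deriv2:
  "chi \<rho> / 2 * bern_weight_deriv2 a b \<rho>
     = real (a choose 2) * \<rho> ^ (a - 1) * (1 - \<rho>) ^ b + real (b choose 2) * \<rho> ^ a * (1 - \<rho>) ^ (b - 1)
       - real ((a + b) choose 2) * \<rho> ^ a * (1 - \<rho>) ^ b"
  unfolding chi_def bern_weight_deriv2_def real_choose_two
  by (cases a; cases "a - 1"; cases b; cases "b - 1") (simp_all add: field_simps numeral_2_eq_2)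

lemma abs_mult_le: "\<bar>x\<bar> \<le> X \<Longrightarrow> \<bar>y\<bar> \<le> Y \<Longrightarrow> \<bar>x * y\<bar> \<le> X * (Y :: real)"
  by (simp add: abs_mult mult_mono')

definition falling_prod :: "real \<Rightarrow> real \<Rightarrow> nat \<Rightarrow> real" where
  "falling_prod \<rho> \<epsilon> j = (\<Prod>i<j. \<rho> - real i * \<epsilon>)"

lemma abs_falling_prod_le_one:
  assumes "0 \<le> \<rho>" "\<rho> \<le> 1" "0 \<le> \<epsilon>" "real j * \<epsilon> \<le> 1"
  shows "\<bar>falling_prod \<rho> \<epsilon> j\<bar> \<le> 1"
proof -
  have "\<bar>\<rho> - real i * \<epsilon>\<bar> \<le> 1" if "i < j" for i
  proof -
    have "real i * \<epsilon> \<le> real j * \<epsilon>"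
      using that assms(3) by (intro mult_right_mono) auto
    moreover have "0 \<le> real i * \<epsilon>"
      using assms(3) by simp
    ultimately show ?thesis
      unfolding abs_le_iff using assms by linarith
  qed
  then show ?thesis
    unfolding falling_prod_def abs_prod by (intro prod_le_1) auto
qed

lemma falling_prod_one_ge:
  assumes "0 \<le> \<epsilon>" "2 * real m * \<epsilon> \<le> 1"
  shows "(1 / 2) ^ m \<le> falling_prod 1 \<epsilon> m"
proof -
  have "1 / 2 \<le> 1 - real i * \<epsilon>" if "i < m" for i
  proof -
    have "real i * \<epsilon> \<le> real m * \<epsilon>"
      using that assms(1) by (intro mult_right_mono) auto
    then show ?thesis
      using assms(2) by linarith
  qed
  then have "(\<Prod>i<m. 1 / 2 :: real) \<le> (\<Prod>i<m. 1 - real i * \<epsilon>)"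
    by (intro prod_mono) auto
  then show ?thesis
    by (simp add: falling_prod_def)
qed

lemma falling_prod_Suc_expansion:
  "falling_prod \<rho> \<epsilon> (Suc j) - \<rho> ^ Suc j + \<epsilon> * real (Suc j choose 2) * \<rho> ^ j
     = \<epsilon>\<^sup>2 * real j * real (j choose 2) * \<rho> ^ (j - 1)
       + (falling_prod \<rho> \<epsilon> j - \<rho> ^ j + \<epsilon> * real (j choose 2) * \<rho> ^ (j - 1)) * (\<rho> - real j * \<epsilon>)"
proof -
  define t where "t = real (j choose 2)"
  have t_pow: "t * \<rho> ^ (j - 1) * \<rho> = t * \<rho> ^ j"
    unfolding t_def by (cases j) auto
  have "real (Suc j choose 2) = t + real j"
    unfolding t_def real_choose_two by (simp add: field_simps)
  then have "falling_prod \<rho> \<epsilon> (Suc j) - \<rho> ^ Suc j + \<epsilon> * real (Suc j choose 2) * \<rho> ^ j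
      = \<epsilon>\<^sup>2 * real j * t * \<rho> ^ (j - 1) + (falling_prod \<rho> \<epsilon> j - \<rho> ^ j + \<epsilon> * t * \<rho> ^ (j - 1)) * (\<rho> - real j * \<epsilon>)
        + \<epsilon> * (t * \<rho> ^ j - t * \<rho> ^ (j - 1) * \<rho>)"
    by (simp add: falling_prod_def algebra_simps power2_eq_square)
  then show ?thesis
    unfolding t_pow unfolding t_def by simp
qed

lemma falling_prod_expansion:
  assumes "0 \<le> \<rho>" "\<rho> \<le> 1" "0 \<le> \<epsilon>" "real j * \<epsilon> \<le> 1"
  shows "\<bar>falling_prod \<rho> \<epsilon> j - \<rho> ^ j + \<epsilon> * real (j choose 2) * \<rho> ^ (j - 1)\<bar>
           \<le> (real (j choose 2) * \<epsilon>)\<^sup>2"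
  using assms(4)
proof (induction j)
  case 0
  then show ?case
    by (simp add: falling_prod_def real_choose_two)
next
  case (Suc j)
  define t where "t = real (j choose 2)"
  define R where "R = falling_prod \<rho> \<epsilon> j - \<rho> ^ j + \<epsilon> * t * \<rho> ^ (j - 1)"
  have j\<epsilon>: "real j * \<epsilon> \<le> 1"
    using Suc.prems assms(3) by (simp add: algebra_simps)
  have "0 \<le> real j * \<epsilon>"
    using assms(3) by simp
  then have "\<bar>\<rho> - real j * \<epsilon>\<bar> \<le> 1"
    unfolding abs_le_iff using assms(1,2) j\<epsilon> by linarith
  then have "\<bar>R * (\<rho> - real j * \<epsilon>)\<bar> \<le> (t * \<epsilon>)\<^sup>2 * 1"
    using Suc.IH[OF j\<epsilon>] unfolding R_def t_def by (intro abs_mult_le)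
  moreover have "\<bar>\<epsilon>\<^sup>2 * real j * t * \<rho> ^ (j - 1)\<bar> \<le> \<epsilon>\<^sup>2 * real j * t"
    using assms(1,2) by (simp add: abs_mult t_def power_le_one mult_left_le)
  moreover have "\<epsilon>\<^sup>2 * real j * t + (t * \<epsilon>)\<^sup>2 \<le> (real (Suc j choose 2) * \<epsilon>)\<^sup>2"
  proof -
    have "real (Suc j choose 2) = t + real j"
      unfolding t_def real_choose_two by (simp add: field_simps)
    moreover have "0 \<le> \<epsilon>\<^sup>2 * (real j * t + real j * real j)"
      by (simp add: t_def)
    ultimately show ?thesis
      by (simp add: power2_eq_square algebra_simps)
  qed
  moreover have "falling_prod \<rho> \<epsilon> (Suc j) - \<rho> ^ Suc j + \<epsilon> * real (Suc j choose 2) * \<rho> ^ (Suc j - 1)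
      = \<epsilon>\<^sup>2 * real j * t * \<rho> ^ (j - 1) + R * (\<rho> - real j * \<epsilon>)"
    unfolding R_def t_def diff_Suc_1 by (rule falling_prod_Suc_expansion)
  ultimately show ?case
    by (smt (verit) abs_triangle_ineq)
qed

lemma abs_product_expansion_le:
  fixes \<epsilon> T \<alpha> \<beta> A B X Y Z :: real
  assumes "0 \<le> \<epsilon>" "\<epsilon> \<le> 1" and unit: "\<bar>\<alpha>\<bar> \<le> 1" "\<bar>\<beta>\<bar> \<le> 1" "\<bar>X\<bar> \<le> 1"
    and AB: "\<bar>A\<bar> \<le> T" "\<bar>B\<bar> \<le> T"
    and R: "\<bar>X - \<alpha> + \<epsilon> * A\<bar> \<le> T\<^sup>2 * \<epsilon>\<^sup>2" "\<bar>Y - \<beta> + \<epsilon> * B\<bar> \<le> T\<^sup>2 * \<epsilon>\<^sup>2" "\<bar>Z - 1 + \<epsilon> * T\<bar> \<le> T\<^sup>2 * \<epsilon>\<^sup>2"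
  shows "\<bar>X * Y - Z * (\<alpha> * \<beta> + \<epsilon> * (T * \<alpha> * \<beta> - A * \<beta> - \<alpha> * B))\<bar> \<le> 8 * (1 + T) ^ 3 * \<epsilon>\<^sup>2"
proof -
  define L where "L = T * \<alpha> * \<beta> - A * \<beta> - \<alpha> * B"
  have T: "0 \<le> T"
    using AB(1) by linarith
  \<comment> \<open>The terms of order \<epsilon> cancel exactly.\<close>
  have "X * Y - Z * (\<alpha> * \<beta> + \<epsilon> * L)
      = \<epsilon>\<^sup>2 * (A * B + T * L) + X * (Y - \<beta> + \<epsilon> * B) + (X - \<alpha> + \<epsilon> * A) * (\<beta> - \<epsilon> * B)
        - (Z - 1 + \<epsilon> * T) * (\<alpha> * \<beta> + \<epsilon> * L)"
    unfolding L_def by (simp add: algebra_simps power2_eq_square)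
  moreover have "\<bar>L\<bar> \<le> 3 * T"
    unfolding L_def using abs_mult_le[OF abs_mult_le[of T T \<alpha> 1] unit(2)] abs_mult_le[OF AB(1) unit(2)]
      abs_mult_le[OF unit(1) AB(2)] T unit by simp
  then have "\<bar>\<alpha> * \<beta> + \<epsilon> * L\<bar> \<le> 1 + 3 * T" "\<bar>A * B + T * L\<bar> \<le> 4 * T\<^sup>2"
    using abs_mult_le[OF unit(1,2)] abs_mult_le[of \<epsilon> 1 L "3 * T"] abs_mult_le[OF AB]
      abs_mult_le[of T T L "3 * T"] assms(1,2) T
    by (simp_all add: power2_eq_square)
  moreover have "\<bar>\<beta> - \<epsilon> * B\<bar> \<le> 1 + T"
    using abs_mult_le[of \<epsilon> 1 B T] AB unit assms(1,2) by simp
  ultimately have "\<bar>X * Y - Z * (\<alpha> * \<beta> + \<epsilon> * L)\<bar>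
      \<le> \<epsilon>\<^sup>2 * (4 * T\<^sup>2) + 1 * (T\<^sup>2 * \<epsilon>\<^sup>2) + T\<^sup>2 * \<epsilon>\<^sup>2 * (1 + T) + T\<^sup>2 * \<epsilon>\<^sup>2 * (1 + 3 * T)"
    using abs_mult_le[OF abs_of_nonneg[of "\<epsilon>\<^sup>2", THEN eq_refl]] abs_mult_le[OF unit(3) R(2)]
      abs_mult_le[OF R(1)] abs_mult_le[OF R(3)]
    by (smt (verit) zero_le_power2)
  also have "\<dots> = (7 + 4 * T) * T\<^sup>2 * \<epsilon>\<^sup>2"
    by (simp add: algebra_simps)
  also have "\<dots> \<le> 8 * (1 + T) ^ 3 * \<epsilon>\<^sup>2"
  proof -
    have "(7 + 4 * T) * T\<^sup>2 \<le> 8 * (1 + T) ^ 3"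
      using T by (simp add: power2_eq_square power3_eq_cube algebra_simps)
    then show ?thesis
      by (simp add: mult_right_mono)
  qed
  finally show ?thesis
    unfolding L_def .
qed

lemma falling_prod_product_expansion:
  assumes "0 \<le> \<rho>" "\<rho> \<le> 1" "0 \<le> \<epsilon>" "\<epsilon> \<le> 1" "real (a + b) * \<epsilon> \<le> 1"
  shows "\<bar>falling_prod \<rho> \<epsilon> a * falling_prod (1 - \<rho>) \<epsilon> b
           - falling_prod 1 \<epsilon> (a + b) * (bern_weight a b \<rho> - \<epsilon> * (chi \<rho> / 2 * bern_weight_deriv2 a b \<rho>))\<bar>
         \<le> 8 * (1 + real ((a + b) choose 2)) ^ 3 * \<epsilon>\<^sup>2"
proof -
  define T where "T = real ((a + b) choose 2)"
  define A B where "A = real (a choose 2) * \<rho> ^ (a - 1)" and "B = real (b choose 2) * (1 - \<rho>) ^ (b - 1)"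
  have choose_le: "real (n choose 2) \<le> T" if "n \<le> a + b" for n
    unfolding T_def using that by (simp add: binomial_right_mono)
  have "real a * \<epsilon> \<le> real (a + b) * \<epsilon>" "real b * \<epsilon> \<le> real (a + b) * \<epsilon>"
    using assms(3) by (simp_all add: mult_right_mono)
  then have \<epsilon>: "real a * \<epsilon> \<le> 1" "real b * \<epsilon> \<le> 1"
    using assms(5) by linarith+
  have sq: "(real (n choose 2) * \<epsilon>)\<^sup>2 \<le> T\<^sup>2 * \<epsilon>\<^sup>2" if "n \<le> a + b" for n
    using choose_le[OF that] by (simp add: power_mult_distrib power_mono mult_right_mono)
  have R: "\<bar>falling_prod \<rho> \<epsilon> a - \<rho> ^ a + \<epsilon> * A\<bar> \<le> T\<^sup>2 * \<epsilon>\<^sup>2"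
    "\<bar>falling_prod (1 - \<rho>) \<epsilon> b - (1 - \<rho>) ^ b + \<epsilon> * B\<bar> \<le> T\<^sup>2 * \<epsilon>\<^sup>2"
    "\<bar>falling_prod 1 \<epsilon> (a + b) - 1 + \<epsilon> * T\<bar> \<le> T\<^sup>2 * \<epsilon>\<^sup>2"
    using order_trans[OF falling_prod_expansion[of \<rho> \<epsilon> a] sq[of a]]
      order_trans[OF falling_prod_expansion[of "1 - \<rho>" \<epsilon> b] sq[of b]]
      order_trans[OF falling_prod_expansion[of 1 \<epsilon> "a + b"] sq[of "a + b"]] assms \<epsilon>
    unfolding A_def B_def T_def by (simp_all add: mult.assoc)
  have AB: "\<bar>A\<bar> \<le> T" "\<bar>B\<bar> \<le> T"
    unfolding A_def B_def using assms choose_le[of a] choose_le[of b]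
    by (auto simp: abs_mult power_le_one power_abs intro!: mult_le_one order_trans[OF mult_right_le_one_le])
  have unit: "\<bar>\<rho> ^ a\<bar> \<le> 1" "\<bar>(1 - \<rho>) ^ b\<bar> \<le> 1" "\<bar>falling_prod \<rho> \<epsilon> a\<bar> \<le> 1"
    using assms \<epsilon> abs_falling_prod_le_one by (auto simp: power_le_one power_abs)
  have "bern_weight a b \<rho> - \<epsilon> * (chi \<rho> / 2 * bern_weight_deriv2 a b \<rho>)
      = \<rho> ^ a * (1 - \<rho>) ^ b + \<epsilon> * (T * \<rho> ^ a * (1 - \<rho>) ^ b - A * (1 - \<rho>) ^ b - \<rho> ^ a * B)"
    unfolding chi_mult_bern_weight_deriv2 bern_weight_def A_def B_def T_def by (simp add: algebra_simps)
  then show ?thesis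
    unfolding T_def[symmetric] by (rule ssubst) (rule abs_product_expansion_le[OF assms(3,4) unit AB R])
qed

lemma falling_prod_ratio_expansion:
  assumes "0 \<le> \<rho>" "\<rho> \<le> 1" "0 \<le> \<epsilon>" "\<epsilon> \<le> 1" "2 * real (a + b) * \<epsilon> \<le> 1"
  shows "\<bar>falling_prod \<rho> \<epsilon> a * falling_prod (1 - \<rho>) \<epsilon> b / falling_prod 1 \<epsilon> (a + b)
           - bern_weight a b \<rho> + \<epsilon> * (chi \<rho> / 2 * bern_weight_deriv2 a b \<rho>)\<bar>
         \<le> 2 ^ (a + b) * 8 * (1 + real ((a + b) choose 2)) ^ 3 * \<epsilon>\<^sup>2"
proof -
  define Z where "Z = falling_prod 1 \<epsilon> (a + b)"
  define E where "E = falling_prod \<rho> \<epsilon> a * falling_prod (1 - \<rho>) \<epsilon> b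
    - Z * (bern_weight a b \<rho> - \<epsilon> * (chi \<rho> / 2 * bern_weight_deriv2 a b \<rho>))"
  have Z: "(1 / 2) ^ (a + b) \<le> Z"
    unfolding Z_def using falling_prod_one_ge assms(3,5) .
  then have "0 < Z"
    by (rule less_le_trans[rotated]) simp
  then have "\<bar>falling_prod \<rho> \<epsilon> a * falling_prod (1 - \<rho>) \<epsilon> b / Z
           - bern_weight a b \<rho> + \<epsilon> * (chi \<rho> / 2 * bern_weight_deriv2 a b \<rho>)\<bar> = \<bar>E\<bar> / Z"
    unfolding E_def by (simp add: field_simps)
  also have "\<dots> \<le> \<bar>E\<bar> * 2 ^ (a + b)"
  proof -
    have "1 / Z \<le> 1 / (1 / 2) ^ (a + b)"
      using Z \<open>0 < Z\<close> by (intro divide_left_mono) auto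
    then show ?thesis
      using mult_left_mono[of "1 / Z" "2 ^ (a + b)" "\<bar>E\<bar>"] by (simp add: power_one_over)
  qed
  also have "\<dots> \<le> 8 * (1 + real ((a + b) choose 2)) ^ 3 * \<epsilon>\<^sup>2 * 2 ^ (a + b)"
  proof -
    have "real (a + b) * \<epsilon> \<le> 1"
      using assms(3,5) mult_nonneg_nonneg[of "real (a + b)" \<epsilon>] by linarith
    then show ?thesis
      unfolding E_def Z_def using assms by (intro mult_right_mono falling_prod_product_expansion) auto
  qed
  finally show ?thesis
    unfolding Z_def by (simp add: algebra_simps)
qed

lemma falling_prod_of_nat:
  assumes "0 < n"
  shows "falling_prod (real k / real n) (1 / real n) j = real (k choose j) * fact j / real n ^ j"
proof -
  have "real k / real n - real i * (1 / real n) = (real k - real i) / real n" for i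
    by (simp add: diff_divide_distrib)
  then have "falling_prod (real k / real n) (1 / real n) j = (\<Prod>i<j. real k - real i) / real n ^ j"
    unfolding falling_prod_def by (simp add: prod_dividef)
  also have "(\<Prod>i<j. real k - real i) = real (k choose j) * fact j"
    by (simp add: binomial_gbinomial gbinomial_prod_rev atLeast0LessThan)
  finally show ?thesis .
qed

text \<open>The probability, for k particles placed uniformly at random on n sites, of one prescribed
  pattern with j particles on m given sites.\<close>

definition hypergeom_weight :: "nat \<Rightarrow> nat \<Rightarrow> nat \<Rightarrow> nat \<Rightarrow> real" where
  "hypergeom_weight n m k j = real (completions (n - m) k j) / real (n choose k)"

lemma hypergeom_weight_eq_falling_prod:
  assumes "j \<le> m" "m \<le> n" "k \<le> n" "0 < n"
  shows "hypergeom_weight n m k j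
       = falling_prod (real k / real n) (1 / real n) j * falling_prod (1 - real k / real n) (1 / real n) (m - j)
         / falling_prod 1 (1 / real n) m"
proof -
  have "1 - real k / real n = real (n - k) / real n" "(1 :: real) = real n / real n"
    using assms by (simp_all add: field_simps)
  then have rescale: "falling_prod (1 - real k / real n) (1 / real n) (m - j)
        = falling_prod (real (n - k) / real n) (1 / real n) (m - j)"
      "falling_prod 1 (1 / real n) m = falling_prod (real n / real n) (1 / real n) m"
    by simp_all
  have "falling_prod (real k / real n) (1 / real n) j * falling_prod (1 - real k / real n) (1 / real n) (m - j)
         / falling_prod 1 (1 / real n) m
      = real (k choose j) * fact j / real n ^ j * (real (n - k choose (m - j)) * fact (m - j) / real n ^ (m - j))
         / (real (n choose m) * fact m / real n ^ m)"
    unfolding rescale falling_prod_of_nat[OF assms(4)] by simp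
  also have "\<dots> = real (k choose j) * fact j * (real (n - k choose (m - j)) * fact (m - j)) / (real (n choose m) * fact m)"
    using assms by (simp add: field_simps flip: power_add)
  also have "\<dots> = hypergeom_weight n m k j"
  proof (cases "j \<le> k \<and> m - j \<le> n - k")
    case True
    then have "k - j \<le> n - m" "n - m - (k - j) = n - k - (m - j)"
      using assms by linarith+
    then show ?thesis
      using True assms by (simp add: hypergeom_weight_def completions_def binomial_fact field_simps)
  next
    case False
    then have "k choose j = 0 \<or> n - k choose (m - j) = 0" "completions (n - m) k j = 0"
      using assms by (auto simp: completions_def)
    then show ?thesis
      by (auto simp: hypergeom_weight_def)
  qed
  finally show ?thesis ..
qed

lemma hypergeom_weight_empty: "0 < n \<Longrightarrow> k \<le> n \<Longrightarrow> hypergeom_weight n 0 k 0 = 1"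
  by (simp add: hypergeom_weight_eq_falling_prod falling_prod_def)

lemma hypergeom_weight_single: "0 < n \<Longrightarrow> k \<le> n \<Longrightarrow> hypergeom_weight n 1 k 1 = real k / real n"
  by (simp add: hypergeom_weight_eq_falling_prod falling_prod_def)

lemma hypergeom_weight_expansion:
  assumes "j \<le> m" "k \<le> n" "2 * m \<le> n" "0 < n"
  shows "\<bar>hypergeom_weight n m k j - bern_weight j (m - j) (real k / real n)
           + chi (real k / real n) / (2 * real n) * bern_weight_deriv2 j (m - j) (real k / real n)\<bar>
         \<le> 2 ^ m * 8 * (1 + real (m choose 2)) ^ 3 / (real n)\<^sup>2"
proof -
  have "2 * real (j + (m - j)) * (1 / real n) \<le> 1"
    using assms by (simp add: field_simps)
  then have "\<bar>hypergeom_weight n m k j - bern_weight j (m - j) (real k / real n)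
           + 1 / real n * (chi (real k / real n) / 2 * bern_weight_deriv2 j (m - j) (real k / real n))\<bar>
         \<le> 2 ^ m * 8 * (1 + real (m choose 2)) ^ 3 * (1 / real n)\<^sup>2"
    using falling_prod_ratio_expansion[of "real k / real n" "1 / real n" j "m - j"] assms
    by (simp add: hypergeom_weight_eq_falling_prod)
  then show ?thesis
    by (simp add: power_one_over field_simps)
qed

section \<open>The torus and its boxes\<close>

lemma torus_eq_PiE: "torus N = Pi\<^sub>E UNIV (\<lambda>_. {0..<int N})"
  unfolding torus_def PiE_UNIV_domain by auto

lemma finite_torus: "finite (torus N)"
  unfolding torus_eq_PiE by (rule finite_PiE) auto

lemma configs_eq_configs_on: "configs N = configs_on (torus N)"
  unfolding configs_def configs_on_def ..

lemma tor_in_torus: "0 < N \<Longrightarrow> tor N y \<in> torus N"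
  unfolding tor_def torus_def by auto

lemma tor_eq_self: "x \<in> torus N \<Longrightarrow> tor N x = x"
  unfolding tor_def torus_def by auto

definition cube :: "nat \<Rightarrow> ('d::finite \<Rightarrow> int) set" where
  "cube l = {v. \<forall>i. \<bar>v i\<bar> \<le> int l}"

lemma card_cube: "card (cube l :: ('d::finite \<Rightarrow> int) set) = (2 * l + 1) ^ CARD('d)"
proof -
  have "\<bar>a\<bar> \<le> int l \<longleftrightarrow> a \<in> {- int l..int l}" for a :: int
    by auto
  then have "cube l = (Pi\<^sub>E UNIV (\<lambda>_. {- int l..int l}) :: ('d \<Rightarrow> int) set)"
    unfolding cube_def PiE_UNIV_domain Pi_def by auto
  moreover have "nat (2 * int l + 1) = 2 * l + 1"
    by arith
  ultimately show ?thesis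
    by (simp add: card_PiE)
qed

lemma cube_mono:
  assumes "L \<le> l"
  shows "cube L \<subseteq> cube l"
proof
  fix v :: "'d::finite \<Rightarrow> int"
  assume "v \<in> cube L"
  then have "\<bar>v i\<bar> \<le> int l" for i
    using assms unfolding cube_def by (metis mem_Collect_eq of_nat_le_iff order_trans)
  then show "v \<in> cube l"
    unfolding cube_def by simp
qed

lemma finite_subset_cube:
  fixes A :: "('d::finite \<Rightarrow> int) set"
  assumes "finite A"
  obtains L where "A \<subseteq> cube L"
proof -
  have "finite ((\<lambda>(a, i). nat \<bar>a i\<bar>) ` (A \<times> UNIV))"
    using assms by simp
  then obtain L where L: "\<forall>t \<in> (\<lambda>(a, i). nat \<bar>a i\<bar>) ` (A \<times> UNIV). t \<le> L"
    using finite_nat_set_iff_bounded_le by blast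
  have "\<bar>a i\<bar> \<le> int L" if "a \<in> A" for a i
  proof -
    have "nat \<bar>a i\<bar> \<in> (\<lambda>(a, i). nat \<bar>a i\<bar>) ` (A \<times> UNIV)"
      using that by force
    then have "nat \<bar>a i\<bar> \<le> L"
      using L by blast
    then show ?thesis
      by linarith
  qed
  then show thesis
    using that[of L] unfolding cube_def by blast
qed

lemma box_eq_image: "box N l x = (\<lambda>v. tor N (\<lambda>i. x i + v i)) ` cube l"
  unfolding box_def cube_def by blast

lemma inj_on_box_shift:
  assumes "2 * l + 1 \<le> N"
  shows "inj_on (\<lambda>v. tor N (\<lambda>i. x i + v i)) (cube l)"
proof (rule inj_onI, rule ext)
  fix v w i
  assume "v \<in> cube l" "w \<in> cube l" and eq: "tor N (\<lambda>i. x i + v i) = tor N (\<lambda>i. x i + w i)"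
  then have "\<bar>v i\<bar> \<le> int l" "\<bar>w i\<bar> \<le> int l"
    unfolding cube_def by auto
  then have "\<bar>v i - w i\<bar> < int N"
    using assms by linarith
  moreover have "int N dvd v i - w i"
    using fun_cong[OF eq, of i] unfolding tor_def by (simp add: mod_eq_dvd_iff)
  ultimately show "v i = w i"
    using dvd_imp_le_int[of "v i - w i" "int N"] by linarith
qed

lemma card_box:
  assumes "2 * l + 1 \<le> N"
  shows "card (box N l x :: ('d::finite \<Rightarrow> int) set) = (2 * l + 1) ^ CARD('d)"
  unfolding box_eq_image card_image[OF inj_on_box_shift[OF assms]] card_cube ..

lemma box_subset_torus: "0 < N \<Longrightarrow> box N l x \<subseteq> torus N"
  unfolding box_eq_image by (auto intro: tor_in_torus)

lemma finite_box: "0 < N \<Longrightarrow> finite (box N l x)"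
  using finite_subset[OF box_subset_torus finite_torus] .

lemma center_in_box: "x \<in> torus N \<Longrightarrow> x \<in> box N l x"
  unfolding box_def by (intro CollectI exI[of _ "\<lambda>_. 0"]) (simp add: tor_eq_self)

lemma shift_in_box: "a \<in> cube l \<Longrightarrow> tor N (\<lambda>i. x i + a i) \<in> box N l x"
  unfolding box_eq_image by (rule imageI)

lemma card_occupied_box_le:
  fixes x :: "'d::finite \<Rightarrow> int"
  assumes "2 * l + 1 \<le> N"
  shows "card {y\<in>box N l x. \<eta> y} \<le> (2 * l + 1) ^ CARD('d)"
proof -
  have "finite (box N l x)"
    using assms by (intro finite_box) simp
  then show ?thesis
    using card_mono[of "box N l x" "{y\<in>box N l x. \<eta> y}"] card_box[OF assms, of x] by auto
qed

lemma blockavg_eq_card: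
  fixes x :: "'d::finite \<Rightarrow> int"
  assumes "2 * l + 1 \<le> N"
  shows "blockavg N l x \<xi> = real (card {y\<in>box N l x. \<xi> y}) / (2 * real l + 1) ^ CARD('d)"
proof -
  have "finite (box N l x)"
    using assms by (intro finite_box) simp
  then show ?thesis
    unfolding blockavg_def by (simp add: Int_def conj_commute)
qed

section \<open>Expectations of local functions\<close>

lemma prod_if_eq_bern_weight:
  assumes "finite S"
  shows "(\<Prod>z\<in>S. if \<zeta> z then r else 1 - r) = bern_weight (card {z\<in>S. \<zeta> z}) (card S - card {z\<in>S. \<zeta> z}) r"
proof -
  have "S \<inter> {z. \<zeta> z} = {z\<in>S. \<zeta> z}" "S \<inter> - {z. \<zeta> z} = S - {z\<in>S. \<zeta> z}"
    by auto
  then show ?thesis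
    using assms by (simp add: prod.If_cases bern_weight_def card_Diff_subset)
qed

lemma bern_expectation_local:
  assumes "S \<subseteq> torus N" "depends_on S G"
  shows "(\<Sum>\<xi>\<in>configs N. bern N r \<xi> * G \<xi>)
       = (\<Sum>\<zeta>\<in>configs_on S. G \<zeta> * bern_weight (card {z\<in>S. \<zeta> z}) (card S - card {z\<in>S. \<zeta> z}) r)"
proof -
  have "finite S"
    using assms(1) finite_subset finite_torus by blast
  then show ?thesis
    using sum_configs_on_local[OF finite_torus assms, of "\<lambda>b. if b then r else 1 - r"]
    by (simp add: configs_eq_configs_on bern_def prod_if_eq_bern_weight mult.commute)
qed

lemma bern_expectation_const: "(\<Sum>\<xi>\<in>configs N. bern N r \<xi>) = 1"
  using bern_expectation_local[OF empty_subsetI depends_on_const[of 1], of N r]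
  by (simp add: configs_on_empty bern_weight_def)

lemma bern_expectation_site: "x \<in> torus N \<Longrightarrow> (\<Sum>\<xi>\<in>configs N. bern N r \<xi> * of_bool (\<xi> x)) = r"
  using bern_expectation_local[of "{x}" N, OF _ depends_on_site]
  by (simp add: sum_configs_on_singleton bern_weight_def)

lemma bern_expectation_affine:
  fixes x :: "'d::finite \<Rightarrow> int"
  assumes "x \<in> torus N"
  shows "(\<Sum>\<xi>\<in>configs N. bern N r \<xi> * (G \<xi> + a + b * of_bool (\<xi> x)))
       = (\<Sum>\<xi>\<in>configs N. bern N r \<xi> * G \<xi>) + a + b * r"
proof -
  have "(\<Sum>\<xi>\<in>configs N. bern N r \<xi> * (G \<xi> + a + b * of_bool (\<xi> x)))
      = (\<Sum>\<xi>\<in>configs N. bern N r \<xi> * G \<xi>) + a * (\<Sum>\<xi>\<in>(configs N :: (('d \<Rightarrow> int) \<Rightarrow> bool) set). bern N r \<xi>)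
        + b * (\<Sum>\<xi>\<in>configs N. bern N r \<xi> * of_bool (\<xi> x))"
    by (simp add: algebra_simps sum.distrib sum_distrib_left)
  then show ?thesis
    by (simp add: bern_expectation_const bern_expectation_site[OF assms])
qed

lemma cond_exp_block_affine:
  "cond_exp_block N r l x (\<lambda>\<xi>. G \<xi> + a + b * H \<xi>) \<eta>
     = cond_exp_block N r l x G \<eta> + a * cond_exp_block N r l x (\<lambda>_. 1) \<eta> + b * cond_exp_block N r l x H \<eta>"
proof -
  have "(\<Sum>\<xi>\<in>X. w \<xi> * (G \<xi> + a + b * H \<xi>)) = (\<Sum>\<xi>\<in>X. w \<xi> * G \<xi>) + a * (\<Sum>\<xi>\<in>X. w \<xi> * 1) + b * (\<Sum>\<xi>\<in>X. w \<xi> * H \<xi>)"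
    for X and w :: "_ \<Rightarrow> real"
    by (simp add: algebra_simps sum.distrib sum_distrib_left)
  then show ?thesis
    unfolding cond_exp_block_def by (simp only: add_divide_distrib times_divide_eq_right)
qed

lemma cond_exp_block_half_local:
  fixes x :: "'d::finite \<Rightarrow> int"
  assumes "2 * l + 1 \<le> N" "S \<subseteq> box N l x" "depends_on S F"
  shows "cond_exp_block N (1/2) l x F \<eta>
       = (\<Sum>\<zeta>\<in>configs_on S. F \<zeta> * hypergeom_weight ((2 * l + 1) ^ CARD('d)) (card S)
            (card {y\<in>box N l x. \<eta> y}) (card {z\<in>S. \<zeta> z}))"
proof -
  \<comment> \<open>All configurations have the same weight, so conditioning on the level set is counting.\<close>
  define n where "n = (2 * l + 1) ^ CARD('d)"
  define k where "k = card {y\<in>box N l x. \<eta> y}"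
  define level where "level = {\<xi>\<in>configs N. blockavg N l x \<xi> = blockavg N l x \<eta>}"
  have "0 < N"
    using assms(1) by simp
  then have box: "finite (box N l x)" "box N l x \<subseteq> torus N" "card (box N l x) = n"
    by (simp_all add: finite_box box_subset_torus card_box[OF assms(1)] n_def)
  have "real n = (2 * real l + 1) ^ CARD('d)"
    unfolding n_def by (simp add: add.commute)
  then have "level = {\<xi>\<in>configs N. card {y\<in>box N l x. \<xi> y} = k}"
    unfolding level_def k_def blockavg_eq_card[OF assms(1)] by simp
  then have sum_level: "(\<Sum>\<xi>\<in>level. G \<xi>)
      = 2 ^ card (torus N - box N l x) * (\<Sum>\<zeta>\<in>configs_on S'. G \<zeta> * completions (n - card S') k (card {z\<in>S'. \<zeta> z}))"
    if "S' \<subseteq> box N l x" "depends_on S' G" for S' G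
    using sum_configs_on_level_local[OF finite_torus that(1) box(2) that(2)]
    by (simp add: sum.inter_filter configs_eq_configs_on finite_configs_on finite_torus box(3))
  have "k \<le> n"
    unfolding k_def n_def using card_occupied_box_le[OF assms(1)] .
  then have "0 < real (n choose k)"
    by simp
  moreover have "bern N (1/2) \<xi> = (1/2) ^ card (torus N :: ('d \<Rightarrow> int) set)"
    for \<xi> :: "('d \<Rightarrow> int) \<Rightarrow> bool"
    unfolding bern_def by (subst prod.cong[OF refl, of _ _ "\<lambda>_. 1/2"]) auto
  ultimately show ?thesis
    unfolding cond_exp_block_def level_def[symmetric]
    using sum_level[OF assms(2,3)] sum_level[OF empty_subsetI depends_on_const[of 1]]
    by (simp add: configs_on_empty completions_def hypergeom_weight_def sum_distrib_left[symmetric]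
        sum_divide_distrib n_def k_def)
qed

lemma cond_exp_block_half_affine:
  fixes x :: "'d::finite \<Rightarrow> int"
  assumes "2 * l + 1 \<le> N" "x \<in> torus N"
  shows "cond_exp_block N (1/2) l x (\<lambda>\<xi>. G \<xi> + a + b * of_bool (\<xi> x)) \<eta>
       = cond_exp_block N (1/2) l x G \<eta> + a + b * blockavg N l x \<eta>"
proof -
  define n where "n = (2 * l + 1) ^ CARD('d)"
  define k where "k = card {y\<in>box N l x. \<eta> y}"
  have "0 < n" "k \<le> n"
    unfolding n_def k_def using card_occupied_box_le[OF assms(1)] by simp_all
  moreover have "x \<in> box N l x"
    using center_in_box[OF assms(2)] .
  ultimately have "cond_exp_block N (1/2) l x (\<lambda>_. 1) \<eta> = 1"
    "cond_exp_block N (1/2) l x (\<lambda>\<xi>. of_bool (\<xi> x)) \<eta> = blockavg N l x \<eta>"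
    using cond_exp_block_half_local[where x = x and \<eta> = \<eta>, OF assms(1) empty_subsetI depends_on_const[of 1]]
      cond_exp_block_half_local[where x = x and \<eta> = \<eta>, OF assms(1) _ depends_on_site]
    by (simp_all add: configs_on_empty sum_configs_on_singleton hypergeom_weight_empty
        hypergeom_weight_single[unfolded One_nat_def] blockavg_eq_card[OF assms(1)] n_def k_def add.commute)
  then show ?thesis
    by (simp add: cond_exp_block_affine)
qed

section \<open>The second-order expansion\<close>

lemma depends_on_shift_loc:
  assumes "depends_on A h"
  shows "depends_on ((\<lambda>a. tor N (\<lambda>i. x i + a i)) ` A) (shift_loc N h x)"
  unfolding depends_on_def shift_loc_def by (auto intro!: depends_onD[OF assms])

lemma abs_shift_loc_le:
  assumes "finite A" "depends_on A h"
  shows "\<bar>shift_loc N h x \<xi>\<bar> \<le> (\<Sum>\<zeta>\<in>configs_on A. \<bar>h \<zeta>\<bar>)"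
proof -
  define \<zeta> where "\<zeta> = (\<lambda>a. a \<in> A \<and> \<xi> (tor N (\<lambda>i. x i + a i)))"
  have "shift_loc N h x \<xi> = h \<zeta>"
    unfolding shift_loc_def \<zeta>_def by (rule depends_onD[OF assms(2)]) simp
  moreover have "\<zeta> \<in> configs_on A"
    unfolding \<zeta>_def configs_on_def by simp
  ultimately show ?thesis
    using finite_configs_on[OF assms(1)] by (auto intro: member_le_sum)
qed

lemma block_error_eq_sum:
  fixes x :: "'d::finite \<Rightarrow> int" and N l :: nat and \<eta> :: "('d \<Rightarrow> int) \<Rightarrow> bool"
    and S :: "('d \<Rightarrow> int) set"
  defines "\<rho> \<equiv> blockavg N l x \<eta>" and "j \<equiv> \<lambda>\<zeta>. card {z\<in>S. \<zeta> z}"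
  assumes "2 * l + 1 \<le> N" "x \<in> torus N" "S \<subseteq> box N l x" "depends_on S G"
    and F: "F = (\<lambda>\<xi>. G \<xi> + a + b * of_bool (\<xi> x))"
  shows "cond_exp_block N (1/2) l x F \<eta> - (\<Sum>\<xi>\<in>configs N. bern N \<rho> \<xi> * F \<xi>)
           + chi \<rho> / (2 * (2 * real l + 1) ^ CARD('d)) * (deriv ^^ 2) (\<lambda>r. \<Sum>\<xi>\<in>configs N. bern N r \<xi> * F \<xi>) \<rho>
         = (\<Sum>\<zeta>\<in>configs_on S. G \<zeta> *
             (hypergeom_weight ((2 * l + 1) ^ CARD('d)) (card S) (card {y\<in>box N l x. \<eta> y}) (j \<zeta>)
              - bern_weight (j \<zeta>) (card S - j \<zeta>) \<rho>
              + chi \<rho> / (2 * (2 * real l + 1) ^ CARD('d)) * bern_weight_deriv2 (j \<zeta>) (card S - j \<zeta>) \<rho>))"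
proof -
  have "S \<subseteq> torus N"
    using assms(5) box_subset_torus[of N l x] assms(3) by simp
  define P where "P = (\<lambda>r. \<Sum>\<zeta>\<in>configs_on S. G \<zeta> * bern_weight (j \<zeta>) (card S - j \<zeta>) r)"
  have tilde: "(\<lambda>r. \<Sum>\<xi>\<in>configs N. bern N r \<xi> * F \<xi>) = (\<lambda>r. P r + a + b * r)"
    unfolding F P_def j_def
    by (simp add: bern_expectation_affine[OF assms(4)] bern_expectation_local[OF \<open>S \<subseteq> torus N\<close> assms(6)])
  have "(deriv ^^ 2) (\<lambda>r. \<Sum>\<xi>\<in>configs N. bern N r \<xi> * F \<xi>) \<rho>
      = (\<Sum>\<zeta>\<in>configs_on S. G \<zeta> * bern_weight_deriv2 (j \<zeta>) (card S - j \<zeta>) \<rho>)"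
    unfolding tilde P_def by (rule deriv2_bern_weight_sum_affine)
  moreover have "cond_exp_block N (1/2) l x F \<eta>
      = (\<Sum>\<zeta>\<in>configs_on S. G \<zeta> * hypergeom_weight ((2 * l + 1) ^ CARD('d)) (card S) (card {y\<in>box N l x. \<eta> y}) (j \<zeta>))
        + a + b * \<rho>"
    unfolding F \<rho>_def j_def cond_exp_block_half_affine[OF assms(3,4)] cond_exp_block_half_local[OF assms(3,5,6)] ..
  ultimately show ?thesis
    using fun_cong[OF tilde, of \<rho>] unfolding P_def
    by (simp add: distrib_left right_diff_distrib sum.distrib sum_subtractf sum_distrib_left mult.left_commute)
qed

lemma abs_block_error_le:
  fixes x :: "'d::finite \<Rightarrow> int" and N l :: nat and \<eta> :: "('d \<Rightarrow> int) \<Rightarrow> bool"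
  defines "\<rho> \<equiv> blockavg N l x \<eta>"
  assumes "2 * l + 1 \<le> N" "x \<in> torus N" "S \<subseteq> box N l x" "depends_on S G"
    and "2 * card S \<le> (2 * l + 1) ^ CARD('d)" "\<And>\<zeta>. \<bar>G \<zeta>\<bar> \<le> M"
    and F: "F = (\<lambda>\<xi>. G \<xi> + a + b * of_bool (\<xi> x))"
  shows "\<bar>cond_exp_block N (1/2) l x F \<eta> - (\<Sum>\<xi>\<in>configs N. bern N \<rho> \<xi> * F \<xi>)
           + chi \<rho> / (2 * (2 * real l + 1) ^ CARD('d)) * (deriv ^^ 2) (\<lambda>r. \<Sum>\<xi>\<in>configs N. bern N r \<xi> * F \<xi>) \<rho>\<bar>
         \<le> 4 ^ card S * 8 * (1 + real (card S choose 2)) ^ 3 * M / (2 * real l + 1) ^ (2 * CARD('d))"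
proof -
  define n where "n = (2 * l + 1) ^ CARD('d)"
  define k where "k = card {y\<in>box N l x. \<eta> y}"
  define m where "m = card S"
  define E where "E = 2 ^ m * 8 * (1 + real (m choose 2)) ^ 3 / (real n)\<^sup>2"
  have n: "real n = (2 * real l + 1) ^ CARD('d)" "0 < n" "k \<le> n" "2 * m \<le> n"
    unfolding n_def k_def m_def using card_occupied_box_le[OF assms(2)] assms(6)
    by (simp_all add: add.commute)
  have "finite S"
    using assms(4) finite_box[of N l x] assms(2) finite_subset by auto
  have "\<bar>hypergeom_weight n m k (card {z\<in>S. \<zeta> z}) - bern_weight (card {z\<in>S. \<zeta> z}) (m - card {z\<in>S. \<zeta> z}) \<rho>
      + chi \<rho> / (2 * real n) * bern_weight_deriv2 (card {z\<in>S. \<zeta> z}) (m - card {z\<in>S. \<zeta> z}) \<rho>\<bar> \<le> E" for \<zeta>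
  proof -
    have "card {z\<in>S. \<zeta> z} \<le> m"
      unfolding m_def using \<open>finite S\<close> by (intro card_mono) auto
    moreover have "\<rho> = real k / real n"
      unfolding \<rho>_def k_def blockavg_eq_card[OF assms(2)] n(1) ..
    ultimately show ?thesis
      unfolding E_def using hypergeom_weight_expansion n(2-4) by blast
  qed
  then have "\<bar>\<Sum>\<zeta>\<in>configs_on S. G \<zeta> * (hypergeom_weight n m k (card {z\<in>S. \<zeta> z})
        - bern_weight (card {z\<in>S. \<zeta> z}) (m - card {z\<in>S. \<zeta> z}) \<rho>
        + chi \<rho> / (2 * real n) * bern_weight_deriv2 (card {z\<in>S. \<zeta> z}) (m - card {z\<in>S. \<zeta> z}) \<rho>)\<bar>
      \<le> (\<Sum>\<zeta>\<in>configs_on S. M * E)"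
    using assms(7) by (intro order_trans[OF sum_abs] sum_mono abs_mult_le)
  also have "\<dots> = 4 ^ card S * 8 * (1 + real (card S choose 2)) ^ 3 * M / (2 * real l + 1) ^ (2 * CARD('d))"
    unfolding E_def by (simp add: card_configs_on[OF \<open>finite S\<close>] m_def n(1) power_mult
        power_mult_distrib[symmetric] field_simps)
  finally show ?thesis
    using block_error_eq_sum[OF assms(2-5) F] unfolding n(1) unfolding \<rho>_def n_def k_def m_def by simp
qed

text \<open>The summand 1 only serves to make the constant positive.\<close>

definition block_error_const :: "('d::finite \<Rightarrow> int) set \<Rightarrow> ((('d \<Rightarrow> int) \<Rightarrow> bool) \<Rightarrow> real) \<Rightarrow> real" where
  "block_error_const A h = 4 ^ card A * 8 * (1 + real (card A choose 2)) ^ 3 * (\<Sum>\<zeta>\<in>configs_on A. \<bar>h \<zeta>\<bar>) + 1"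

lemma block_error_const_pos: "0 < block_error_const A h"
  unfolding block_error_const_def by (simp add: sum_nonneg add_nonneg_pos)

lemma abs_fx_block_error_le:
  fixes A :: "('d::finite \<Rightarrow> int) set" and x :: "'d \<Rightarrow> int"
  assumes "finite A" "depends_on A h" "A \<subseteq> cube l" "card A < l" "2 * l + 1 \<le> N" "x \<in> torus N"
  shows "\<bar>cond_exp_block N (1/2) l x (fx N A h u x) \<eta> - fx_tilde N A h u x (blockavg N l x \<eta>)
           + chi (blockavg N l x \<eta>) / (2 * (2 * real l + 1) ^ CARD('d))
             * (deriv ^^ 2) (fx_tilde N A h u x) (blockavg N l x \<eta>)\<bar>
         \<le> block_error_const A h / real l ^ (2 * CARD('d))"
proof -
  define B where "B = (\<lambda>a. tor N (\<lambda>i. x i + a i)) ` A"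
  define c where "c = deriv (loc_exp A h) (u x)"
  define K where "K = 4 ^ card A * 8 * (1 + real (card A choose 2)) ^ 3 * (\<Sum>\<zeta>\<in>configs_on A. \<bar>h \<zeta>\<bar>)"
  have B: "card B \<le> card A" "B \<subseteq> box N l x" "depends_on B (shift_loc N h x)"
    unfolding B_def using card_image_le[OF assms(1)] assms(3) depends_on_shift_loc[OF assms(2)]
    by (auto intro: shift_in_box)
  have "2 * card B \<le> (2 * l + 1) ^ CARD('d)"
    using B(1) assms(4) self_le_power[of "2 * l + 1" "CARD('d)"] by simp
  moreover have "fx N A h u x = (\<lambda>\<xi>. shift_loc N h x \<xi> + (c * u x - loc_exp A h (u x)) + (- c) * of_bool (\<xi> x))"
    unfolding fx_def c_def by (auto simp: algebra_simps)
  ultimately have "\<bar>cond_exp_block N (1/2) l x (fx N A h u x) \<eta> - fx_tilde N A h u x (blockavg N l x \<eta>)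
           + chi (blockavg N l x \<eta>) / (2 * (2 * real l + 1) ^ CARD('d))
             * (deriv ^^ 2) (fx_tilde N A h u x) (blockavg N l x \<eta>)\<bar>
         \<le> 4 ^ card B * 8 * (1 + real (card B choose 2)) ^ 3 * (\<Sum>\<zeta>\<in>configs_on A. \<bar>h \<zeta>\<bar>)
            / (2 * real l + 1) ^ (2 * CARD('d))"
    unfolding fx_tilde_def[abs_def]
    by (rule abs_block_error_le[OF assms(5,6) B(2,3) _ abs_shift_loc_le[OF assms(1,2)]])
  also have "\<dots> \<le> K / (2 * real l + 1) ^ (2 * CARD('d))"
    unfolding K_def using B(1)
    by (intro divide_right_mono mult_right_mono mult_mono power_increasing power_mono)
      (auto simp: sum_nonneg binomial_right_mono)
  also have "\<dots> \<le> block_error_const A h / real l ^ (2 * CARD('d))"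
    unfolding block_error_const_def K_def[symmetric] using assms(4)
    by (intro frac_le power_mono) (auto simp: K_def sum_nonneg)
  finally show ?thesis .
qed

lemma eventually_mesoscopic_scale:
  assumes "filterlim ell at_top sequentially" "(\<lambda>N. real (ell N) / real N) \<longlonglongrightarrow> 0"
  shows "\<forall>\<^sub>F N in sequentially. M \<le> ell N \<and> 2 * ell N + 1 \<le> N"
proof -
  have "\<forall>\<^sub>F N in sequentially. M \<le> ell N"
    using assms(1) unfolding filterlim_at_top by blast
  moreover have "\<forall>\<^sub>F N in sequentially. real (ell N) / real N < 1 / 3"
    using assms(2) by (rule order_tendstoD) simp
  moreover have "\<forall>\<^sub>F N in sequentially. 0 < N"
    by (rule eventually_gt_at_top)
  ultimately show ?thesis
    by eventually_elim (auto simp: field_simps)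
qed

theorem lemma3p2:
  fixes A :: "('d::finite \<Rightarrow> int) set"
    and h :: "(('d \<Rightarrow> int) \<Rightarrow> bool) \<Rightarrow> real"
    and ell :: "nat \<Rightarrow> nat"
    and u_minus u_plus :: real
  assumes A_fin: "finite A"
    and h_local: "\<And>\<xi> \<xi>'. (\<forall>a\<in>A. \<xi> a = \<xi>' a) \<Longrightarrow> h \<xi> = h \<xi>'"
    and u_bounds: "0 < u_minus" "u_minus < u_plus" "u_plus < 1"
    and ell_inf: "filterlim ell at_top sequentially"
    and ell_small: "(\<lambda>N. real (ell N) / real N) \<longlonglongrightarrow> 0"
  shows "\<exists>C>0. \<forall>\<^sub>F N in sequentially.
           \<forall>u :: ('d \<Rightarrow> int) \<Rightarrow> real. (\<forall>x\<in>torus N. u_minus \<le> u x \<and> u x \<le> u_plus) \<longrightarrow>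
           (\<forall>x\<in>torus N. \<forall>\<eta>\<in>configs N.
              \<bar>cond_exp_block N (1/2) (ell N) x (fx N A h u x) \<eta>
                - fx_tilde N A h u x (blockavg N (ell N) x \<eta>)
                + chi (blockavg N (ell N) x \<eta>) / (2 * (2 * real (ell N) + 1) ^ CARD('d))
                  * (deriv ^^ 2) (fx_tilde N A h u x) (blockavg N (ell N) x \<eta>)\<bar>
              \<le> C / real (ell N) ^ (2 * CARD('d)))"
proof -
  obtain L where "A \<subseteq> cube L"
    using finite_subset_cube[OF A_fin] by blast
  have "depends_on A h"
    unfolding depends_on_def using h_local by blast
  have scale: "A \<subseteq> cube l \<and> card A < l" if "L + card A + 1 \<le> l" for l
    using that subset_trans[OF \<open>A \<subseteq> cube L\<close> cube_mono[of L l]] by simp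
  have "\<forall>\<^sub>F N in sequentially. L + card A + 1 \<le> ell N \<and> 2 * ell N + 1 \<le> N"
    by (rule eventually_mesoscopic_scale[OF ell_inf ell_small])
  then have scales: "\<forall>\<^sub>F N in sequentially. A \<subseteq> cube (ell N) \<and> card A < ell N \<and> 2 * ell N + 1 \<le> N"
    by (rule eventually_mono) (use scale in blast)
  show ?thesis
    by (rule exI[of _ "block_error_const A h"], rule conjI[OF block_error_const_pos],
        rule eventually_mono[OF scales]) (blast intro: abs_fx_block_error_le[OF A_fin \<open>depends_on A h\<close>])
qed

end
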